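(* Let $N\ge3$ and let $\|\cdot\|:\mathbb{C}^N\to\mathbb{R}$ be a norm that is permutation-invariant (i.e. $\|\mathbf{v}\|$ is unchanged by permuting the components of $\mathbf{v}$), satisfies $\|(1,1)\|\neq1$, and satisfies \[ \|\mathbf{v}+\mathbf{w}\|=\big\|\big(\|\mathbf{v}\|,\|\mathbf{w}\|\big)\big\| \] for all $\mathbf{v},\mathbf{w}\in\mathbb{C}^N$ with disjoint supports. Then there exists a real number $p\ge1$ such that for every vector $\mathbf{c}\in\mathbb{C}^N$ whose components all have rational absolute values, \[ \|\mathbf{c}\|=\Big(\sum_{i=1}^N|c_i|^p\Big)^{1/p}. \]
   Context: Vectors with fewer than $N$ entries are identified with vectors in $\mathbb{C}^N$ by padding with zeros; e.g. $(a,b)$ denotes $(a,b,0,\dots,0)\in\mathbb{C}^N$ and $(1,1)=(1,1,0,\dots,0)$. The support of a vector is the set of indices of its nonzero components. *)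

theory Defs
  imports "HOL-Analysis.Analysis" "HOL-Combinatorics.Permutations"
begin

text \<open>Vectors of \<complex>^N are represented as functions nat \<Rightarrow> complex vanishing from index N on.\<close>
definition cvec :: "nat \<Rightarrow> (nat \<Rightarrow> complex) set" where
  "cvec N = {v. \<forall>i\<ge>N. v i = 0}"

definition vsupp :: "(nat \<Rightarrow> complex) \<Rightarrow> nat set" where
  "vsupp v = {i. v i \<noteq> 0}"

definition pair2 :: "complex \<Rightarrow> complex \<Rightarrow> (nat \<Rightarrow> complex)" where
  "pair2 a b = (\<lambda>i. if i = 0 then a else if i = 1 then b else 0)"

definition is_norm_on :: "nat \<Rightarrow> ((nat \<Rightarrow> complex) \<Rightarrow> real) \<Rightarrow> bool" where
  "is_norm_on N f \<longleftrightarrow>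
     (\<forall>v\<in>cvec N. f v \<ge> 0) \<and>
     (\<forall>v\<in>cvec N. f v = 0 \<longleftrightarrow> v = (\<lambda>_. 0)) \<and>
     (\<forall>v\<in>cvec N. \<forall>c::complex. f (\<lambda>i. c * v i) = cmod c * f v) \<and>
     (\<forall>v\<in>cvec N. \<forall>w\<in>cvec N. f (\<lambda>i. v i + w i) \<le> f v + f w)"

definition perm_invariant :: "nat \<Rightarrow> ((nat \<Rightarrow> complex) \<Rightarrow> real) \<Rightarrow> bool" where
  "perm_invariant N f \<longleftrightarrow>
     (\<forall>\<sigma>. \<sigma> permutes {..<N} \<longrightarrow> (\<forall>v\<in>cvec N. f (v \<circ> \<sigma>) = f v))"

end

theory Submission
  imports Defs
begin

(* Let g(x, y) be the norm of (x, y). Splitting a vector into disjointly supported pieces gives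
   the norm of c as g(...g(g(|c_0|, |c_1|), |c_2|)..., |c_(N-1)|). The norm axioms and permutation
   invariance make g a commutative, associative, positively homogeneous and monotone operation
   on [0, oo) with neutral element 0; associativity compares two ways of splitting a vector with
   three entries, which is where N >= 3 enters. For such an operation s(n) = g(...g(g(0, 1), 1)..., 1)
   (n ones) is multiplicative and monotone, hence s(n) = n powr (1/p) with 2 powr (1/p) = g(1, 1) <> 1.
   Homogeneity then gives g(x, y) = (x^p + y^p)^(1/p) whenever x^p and y^p are rational, and
   monotonicity extends this to all x, y >= 0. Finally p >= 1 since g(1, 1) <= 2 by the triangle
   inequality. *)

lemma eq_if_same_nat_fraction_bounds:
  fixes x y :: real
  assumes "0 \<le> x" "0 \<le> y"
    and upper: "\<And>(j::nat) (k::nat). (0::nat) < k \<Longrightarrow> y \<le> j / k \<Longrightarrow> x \<le> j / k"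
    and lower: "\<And>(j::nat) (k::nat). (0::nat) < k \<Longrightarrow> j / k \<le> y \<Longrightarrow> j / k \<le> x"
  shows "x = y"
proof -
  have fraction: "\<exists>(j::nat) (k::nat). (0::nat) < k \<and> q = j / k" if "q \<in> \<rat>" "0 \<le> q" for q :: real
    using that by (elim Rats_abs_nat_div_natE) auto
  have False if "x < y"
  proof -
    obtain q where "q \<in> \<rat>" "x < q" "q < y" using Rats_dense_in_real[OF \<open>x < y\<close>] by blast
    moreover obtain j k :: nat where "0 < k" "q = j / k"
      using fraction[of q] \<open>q \<in> \<rat>\<close> \<open>x < q\<close> \<open>0 \<le> x\<close> by auto
    ultimately show False using lower[of k j] by simp
  qed
  moreover have False if "y < x"
  proof -
    obtain q where "q \<in> \<rat>" "y < q" "q < x" using Rats_dense_in_real[OF \<open>y < x\<close>] by blast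
    moreover obtain j k :: nat where "0 < k" "q = j / k"
      using fraction[of q] \<open>q \<in> \<rat>\<close> \<open>y < q\<close> \<open>0 \<le> y\<close> by auto
    ultimately show False using upper[of k j] by simp
  qed
  ultimately show ?thesis by (cases x y rule: linorder_cases) auto
qed

lemma ln_ratio_le_iff:
  fixes u v :: real and j k :: nat
  assumes "0 < u" "1 < v" "0 < k"
  shows "ln u / ln v \<le> j / k \<longleftrightarrow> u ^ k \<le> v ^ j"
proof -
  have "ln u / ln v \<le> j / k \<longleftrightarrow> k * ln u \<le> j * ln v"
    using assms by (simp add: field_simps)
  also have "\<dots> \<longleftrightarrow> u ^ k \<le> v ^ j"
    using assms by (simp add: ln_realpow[symmetric])
  finally show ?thesis .
qed

lemma ln_ratio_ge_iff:
  fixes u v :: real and j k :: nat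
  assumes "0 < u" "1 < v" "0 < k"
  shows "j / k \<le> ln u / ln v \<longleftrightarrow> v ^ j \<le> u ^ k"
proof -
  have "j / k \<le> ln u / ln v \<longleftrightarrow> j * ln v \<le> k * ln u"
    using assms by (simp add: field_simps)
  also have "\<dots> \<longleftrightarrow> v ^ j \<le> u ^ k"
    using assms by (simp add: ln_realpow[symmetric])
  finally show ?thesis .
qed

lemma mono_multiplicative_eq_powr:
  fixes s :: "nat \<Rightarrow> real"
  assumes mult: "\<And>m n. s (m * n) = s m * s n" and "mono s" and "1 < s 2" and "0 < n"
  shows "s n = real n powr log 2 (s 2)"
proof -
  have "s 2 = s 2 * s 1" using mult[of 2 1] by simp
  then have "s 1 = 1" using \<open>1 < s 2\<close> mult_cancel_left1 by fastforce
  have s_power: "s (m ^ k) = s m ^ k" for m k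
    using \<open>s 1 = 1\<close> by (induction k) (simp_all add: mult)
  have s_le: "s a ^ k \<le> s b ^ j" if "a ^ k \<le> b ^ j" for a b j k
    using monoD[OF \<open>mono s\<close> that] by (simp add: s_power)
  have "1 \<le> s n" using monoD[OF \<open>mono s\<close>, of 1 n] \<open>0 < n\<close> \<open>s 1 = 1\<close> by simp
  have "ln (s n) / ln (s 2) = ln n / ln 2"
  proof (rule eq_if_same_nat_fraction_bounds)
    show "0 \<le> ln (s n) / ln (s 2)" "0 \<le> ln n / ln 2"
      using \<open>1 \<le> s n\<close> \<open>1 < s 2\<close> \<open>0 < n\<close> by simp_all
  next
    fix j k :: nat assume "0 < k" "ln n / ln 2 \<le> j / k"
    then have "real n ^ k \<le> 2 ^ j"
      using \<open>0 < n\<close> by (simp add: ln_ratio_le_iff)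
    then have "n ^ k \<le> 2 ^ j"
      by (metis of_nat_le_numeral_power_cancel_iff of_nat_power)
    then show "ln (s n) / ln (s 2) \<le> j / k"
      using s_le \<open>0 < k\<close> \<open>1 \<le> s n\<close> \<open>1 < s 2\<close> by (simp add: ln_ratio_le_iff)
  next
    fix j k :: nat assume "0 < k" "j / k \<le> ln n / ln 2"
    then have "2 ^ j \<le> real n ^ k"
      using \<open>0 < n\<close> by (simp add: ln_ratio_ge_iff)
    then have "2 ^ j \<le> n ^ k"
      by (metis numeral_power_le_of_nat_cancel_iff of_nat_power)
    then show "j / k \<le> ln (s n) / ln (s 2)"
      using s_le \<open>0 < k\<close> \<open>1 \<le> s n\<close> \<open>1 < s 2\<close> by (simp add: ln_ratio_ge_iff)
  qed
  then have "ln (s n) = log 2 (s 2) * ln n"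
    using \<open>1 < s 2\<close> by (simp add: log_def field_simps)
  moreover have "s n = exp (ln (s n))"
    using \<open>1 \<le> s n\<close> by simp
  ultimately show ?thesis
    using \<open>0 < n\<close> by (simp add: powr_def)
qed

lemma eq_add_if_mono_eq_add_on_Rats:
  fixes G :: "real \<Rightarrow> real \<Rightarrow> real"
  assumes mono: "\<And>x x' y y'. 0 \<le> x \<Longrightarrow> x \<le> x' \<Longrightarrow> 0 \<le> y \<Longrightarrow> y \<le> y' \<Longrightarrow> G x y \<le> G x' y'"
    and rat: "\<And>a b. a \<in> \<rat> \<Longrightarrow> b \<in> \<rat> \<Longrightarrow> 0 \<le> a \<Longrightarrow> 0 \<le> b \<Longrightarrow> G a b = a + b"
    and "0 \<le> x" "0 \<le> y"
  shows "G x y = x + y"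
proof (rule antisym; rule field_le_epsilon)
  fix e :: real assume "0 < e"
  have above: "\<exists>a\<in>\<rat>. z \<le> a \<and> a \<le> z + e / 2" for z
  proof -
    obtain a where "a \<in> \<rat>" "z < a" "a < z + e / 2" using Rats_dense_in_real[of z "z + e / 2"] \<open>0 < e\<close> by auto
    then show ?thesis using less_imp_le by blast
  qed
  have below: "\<exists>a\<in>\<rat>. 0 \<le> a \<and> a \<le> z \<and> z \<le> a + e / 2" if "0 \<le> z" for z
  proof -
    obtain a where "a \<in> \<rat>" "z - e / 2 < a" "a < z" using Rats_dense_in_real[of "z - e / 2" z] \<open>0 < e\<close> by auto
    then show ?thesis using that by (intro bexI[of _ "max 0 a"]) (auto simp: max_def)
  qed
  { obtain a b where "a \<in> \<rat>" "b \<in> \<rat>" "x \<le> a" "y \<le> b" "a \<le> x + e / 2" "b \<le> y + e / 2"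
      using above[of x] above[of y] by blast
    then show "G x y \<le> x + y + e"
      using mono[of x a y b] rat[of a b] \<open>0 \<le> x\<close> \<open>0 \<le> y\<close> by simp }
  { obtain a b where "a \<in> \<rat>" "b \<in> \<rat>" "0 \<le> a" "0 \<le> b" "a \<le> x" "b \<le> y" "x \<le> a + e / 2" "y \<le> b + e / 2"
      using below[OF \<open>0 \<le> x\<close>] below[OF \<open>0 \<le> y\<close>] by blast
    then show "x + y \<le> G x y + e"
      using mono[of a x b y] rat[of a b] by simp }
qed

locale homogeneous_monoid_op =
  fixes g :: "real \<Rightarrow> real \<Rightarrow> real"
  assumes nonneg: "0 \<le> x \<Longrightarrow> 0 \<le> y \<Longrightarrow> 0 \<le> g x y"
    and commute: "g x y = g y x"
    and assoc: "0 \<le> x \<Longrightarrow> 0 \<le> y \<Longrightarrow> 0 \<le> z \<Longrightarrow> g (g x y) z = g x (g y z)"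
    and zero_right: "0 \<le> x \<Longrightarrow> g x 0 = x"
    and homogeneous: "0 \<le> t \<Longrightarrow> 0 \<le> x \<Longrightarrow> 0 \<le> y \<Longrightarrow> g (t * x) (t * y) = t * g x y"
    and mono_left: "0 \<le> x \<Longrightarrow> x \<le> x' \<Longrightarrow> 0 \<le> y \<Longrightarrow> g x y \<le> g x' y"
begin

lemma mono:
  assumes "0 \<le> x" "x \<le> x'" "0 \<le> y" "y \<le> y'"
  shows "g x y \<le> g x' y'"
proof -
  have "g x y \<le> g x' y" using mono_left assms by simp
  also have "\<dots> = g y x'" by (rule commute)
  also have "\<dots> \<le> g y' x'" using mono_left assms by simp
  finally show ?thesis by (simp add: commute)
qed

lemma one_le_g_one_one: "1 \<le> g 1 1"
  using mono[of 1 1 0 1] zero_right[of 1] by simp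

primrec ones :: "nat \<Rightarrow> real" where
  "ones 0 = 0"
| "ones (Suc n) = g (ones n) 1"

lemma ones_nonneg: "0 \<le> ones n"
  by (induction n) (simp_all add: nonneg)

lemma ones_add: "ones (m + n) = g (ones m) (ones n)"
  by (induction n) (simp_all add: zero_right ones_nonneg assoc)

lemma ones_mult: "ones (m * n) = ones m * ones n"
proof (induction m)
  case (Suc m)
  have "ones (Suc m * n) = g (ones n * 1) (ones n * ones m)"
    by (simp add: ones_add Suc mult.commute)
  also have "\<dots> = ones n * g 1 (ones m)"
    using homogeneous[of "ones n" 1 "ones m"] ones_nonneg by simp
  finally show ?case by (simp add: commute mult.commute)
qed simp

lemma ones_mono: "mono ones"
  unfolding mono_iff_le_Suc
proof
  show "ones n \<le> ones (Suc n)" for n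
    using mono[of "ones n" "ones n" 0 1] ones_nonneg zero_right by simp
qed

lemma ones_2: "ones 2 = g 1 1"
  using zero_right[of 1] by (simp add: numeral_2_eq_2 commute)

lemma ones_eq_powr:
  assumes "g 1 1 \<noteq> 1"
  shows "ones n = real n powr log 2 (g 1 1)"
proof (cases "n = 0")
  case False
  have "1 < ones 2" using assms one_le_g_one_one ones_2 by simp
  with False show ?thesis
    using mono_multiplicative_eq_powr[OF ones_mult ones_mono] ones_2 by simp
qed simp

definition pnorm_exponent :: real where
  "pnorm_exponent = 1 / log 2 (g 1 1)"

lemma pnorm_exponent_pos: "g 1 1 \<noteq> 1 \<Longrightarrow> 0 < pnorm_exponent"
  using one_le_g_one_one by (simp add: pnorm_exponent_def)

lemma pnorm_exponent_ge_1: "g 1 1 \<noteq> 1 \<Longrightarrow> g 1 1 \<le> 2 \<Longrightarrow> 1 \<le> pnorm_exponent"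
  using one_le_g_one_one by (simp add: pnorm_exponent_def le_divide_eq)

lemma additive_powr_Rats:
  assumes "g 1 1 \<noteq> 1" and "a \<in> \<rat>" "b \<in> \<rat>" "0 \<le> a" "0 \<le> b"
  shows "g (a powr log 2 (g 1 1)) (b powr log 2 (g 1 1)) = (a + b) powr log 2 (g 1 1)"
proof -
  define r where "r = log 2 (g 1 1)"
  obtain i j m n :: nat where "0 < m" "0 < n" "a = i / m" "b = j / n"
    using \<open>a \<in> \<rat>\<close> \<open>b \<in> \<rat>\<close> \<open>0 \<le> a\<close> \<open>0 \<le> b\<close> by (elim Rats_abs_nat_div_natE) auto
  then have ab: "a = real (i * n) / real (m * n)" "b = real (j * m) / real (m * n)" by simp_all
  define t where "t = (1 / real (m * n)) powr r"
  have scale: "(real k / real (m * n)) powr r = t * ones k" for k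
    using ones_eq_powr[OF \<open>g 1 1 \<noteq> 1\<close>] by (simp add: t_def r_def powr_divide)
  have "g (a powr r) (b powr r) = g (t * ones (i * n)) (t * ones (j * m))"
    by (simp only: ab scale)
  also have "\<dots> = t * ones (i * n + j * m)"
    by (simp add: homogeneous t_def ones_nonneg ones_add)
  also have "\<dots> = (a + b) powr r"
    by (simp only: ab add_divide_distrib[symmetric] of_nat_add[symmetric] scale)
  finally show ?thesis by (simp only: r_def)
qed

theorem eq_pnorm:
  assumes "g 1 1 \<noteq> 1" "0 \<le> x" "0 \<le> y"
  defines "p \<equiv> pnorm_exponent"
  shows "g x y = (x powr p + y powr p) powr (1 / p)"
proof -
  define r where "r = log 2 (g 1 1)"
  have "0 < p" using pnorm_exponent_pos[OF \<open>g 1 1 \<noteq> 1\<close>] by (simp add: p_def)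
  have "r = 1 / p" by (simp add: p_def r_def pnorm_exponent_def)
  then have "0 < r" "p * r = 1" using \<open>0 < p\<close> by simp_all
  have powr_inverse: "(z powr p) powr r = z" "(z powr r) powr p = z" if "0 \<le> z" for z
    using \<open>p * r = 1\<close> that by (simp_all add: powr_powr mult.commute)
  define G where "G X Y = g (X powr r) (Y powr r) powr p" for X Y
  have "G X Y = X + Y" if "0 \<le> X" "0 \<le> Y" for X Y
  proof (rule eq_add_if_mono_eq_add_on_Rats[OF _ _ that])
    show "G X Y \<le> G X' Y'" if "0 \<le> X" "X \<le> X'" "0 \<le> Y" "Y \<le> Y'" for X X' Y Y'
      using that \<open>0 < p\<close> \<open>0 < r\<close> unfolding G_def by (intro powr_mono2 mono powr_mono2) (simp_all add: nonneg)
    show "G a b = a + b" if "a \<in> \<rat>" "b \<in> \<rat>" "0 \<le> a" "0 \<le> b" for a b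
      using additive_powr_Rats[OF \<open>g 1 1 \<noteq> 1\<close> that] powr_inverse(2) that by (simp add: G_def r_def)
  qed
  then have G_pnorm: "G (x powr p) (y powr p) = x powr p + y powr p" by simp
  have "g x y = g ((x powr p) powr r) ((y powr p) powr r)"
    using powr_inverse(1) \<open>0 \<le> x\<close> \<open>0 \<le> y\<close> by simp
  also have "\<dots> = G (x powr p) (y powr p) powr r"
    using powr_inverse(1) nonneg by (simp add: G_def)
  finally have "g x y = (x powr p + y powr p) powr r" by (simp add: G_pnorm)
  then show ?thesis using \<open>r = 1 / p\<close> by simp
qed

end

definition single_entry :: "nat \<Rightarrow> complex \<Rightarrow> nat \<Rightarrow> complex" where
  "single_entry k z = (\<lambda>i. if i = k then z else 0)"

locale composable_symmetric_norm =
  fixes N :: nat and f :: "(nat \<Rightarrow> complex) \<Rightarrow> real"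
  assumes three_le: "3 \<le> N"
    and norm: "is_norm_on N f"
    and perm_invariant: "perm_invariant N f"
    and disjoint_support: "\<forall>v\<in>cvec N. \<forall>w\<in>cvec N. vsupp v \<inter> vsupp w = {} \<longrightarrow>
           f (\<lambda>i. v i + w i) = f (pair2 (complex_of_real (f v)) (complex_of_real (f w)))"
begin

definition pair_norm :: "real \<Rightarrow> real \<Rightarrow> real" where
  "pair_norm x y = f (pair2 (complex_of_real x) (complex_of_real y))"

lemma f_nonneg: "v \<in> cvec N \<Longrightarrow> 0 \<le> f v"
  using norm by (simp add: is_norm_on_def)

lemma f_eq_0_iff: "v \<in> cvec N \<Longrightarrow> f v = 0 \<longleftrightarrow> v = (\<lambda>_. 0)"
  using norm by (simp add: is_norm_on_def)

lemma f_scale: "v \<in> cvec N \<Longrightarrow> f (\<lambda>i. c * v i) = cmod c * f v"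
  using norm by (simp add: is_norm_on_def)

lemma f_triangle: "v \<in> cvec N \<Longrightarrow> w \<in> cvec N \<Longrightarrow> f (\<lambda>i. v i + w i) \<le> f v + f w"
  using norm by (simp add: is_norm_on_def)

lemma f_transpose:
  assumes "a < N" "b < N" "v \<in> cvec N"
  shows "f (v \<circ> Transposition.transpose a b) = f v"
  using perm_invariant permutes_swap_id[of a "{..<N}" b] assms by (simp add: perm_invariant_def)

lemma pair2_in_cvec: "pair2 a b \<in> cvec N"
  using three_le by (simp add: cvec_def pair2_def)

lemma cvec_scale: "v \<in> cvec N \<Longrightarrow> (\<lambda>i. c * v i) \<in> cvec N"
  by (simp add: cvec_def)

lemma pair2_zero_right: "pair2 a 0 = single_entry 0 a"
  by (auto simp: pair2_def single_entry_def)

lemma single_entry_in_cvec: "k < N \<Longrightarrow> single_entry k z \<in> cvec N"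
  by (simp add: cvec_def single_entry_def)

lemma f_add_disjoint:
  assumes "v \<in> cvec N" "w \<in> cvec N" "vsupp v \<inter> vsupp w = {}"
  shows "f (\<lambda>i. v i + w i) = pair_norm (f v) (f w)"
  using disjoint_support assms by (simp add: pair_norm_def)

lemma f_pair2_1_0: "f (pair2 1 0) = 1"
proof -
  let ?v = "pair2 1 0"
  have scaled: "pair2 (complex_of_real (f ?v)) 0 = (\<lambda>i. complex_of_real (f ?v) * ?v i)"
    by (auto simp: pair2_def)
  have "f ?v = pair_norm (f ?v) (f (\<lambda>_. 0))"
    using f_add_disjoint[OF pair2_in_cvec, of "\<lambda>_. 0"] by (simp add: cvec_def vsupp_def)
  also have "\<dots> = f (\<lambda>i. complex_of_real (f ?v) * ?v i)"
    using f_eq_0_iff[of "\<lambda>_. 0"] scaled by (simp add: pair_norm_def cvec_def)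
  also have "\<dots> = f ?v * f ?v"
    using f_scale[OF pair2_in_cvec] f_nonneg[OF pair2_in_cvec] by simp
  finally have "f ?v * f ?v = f ?v" ..
  moreover have "f ?v \<noteq> 0"
    using f_eq_0_iff[OF pair2_in_cvec] by (auto simp: pair2_def fun_eq_iff)
  ultimately show ?thesis by simp
qed

lemma f_single_entry:
  assumes "k < N"
  shows "f (single_entry k z) = cmod z"
proof -
  let ?e = "pair2 1 0 \<circ> Transposition.transpose 0 k"
  have "?e \<in> cvec N"
    using assms by (simp add: cvec_def pair2_def Transposition.transpose_def)
  have "single_entry k z = (\<lambda>i. z * ?e i)"
    by (auto simp: single_entry_def pair2_def Transposition.transpose_def)
  then have "f (single_entry k z) = cmod z * f ?e"
    using f_scale[OF \<open>?e \<in> cvec N\<close>] by simp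
  also have "f ?e = 1"
    using f_transpose[OF _ assms pair2_in_cvec] f_pair2_1_0 three_le by simp
  finally show ?thesis by simp
qed

lemma f_add_single_entry:
  assumes "v \<in> cvec N" "k < N" "v k = 0"
  shows "f (\<lambda>i. v i + single_entry k z i) = pair_norm (f v) (cmod z)"
proof -
  have "vsupp v \<inter> vsupp (single_entry k z) = {}"
    using \<open>v k = 0\<close> by (auto simp: vsupp_def single_entry_def)
  then show ?thesis
    using f_add_disjoint[OF \<open>v \<in> cvec N\<close> single_entry_in_cvec[OF \<open>k < N\<close>]]
      f_single_entry[OF \<open>k < N\<close>] by simp
qed

lemma f_pair2: "f (pair2 a b) = pair_norm (cmod a) (cmod b)"
proof -
  have "f (pair2 a b) = f (\<lambda>i. pair2 a 0 i + single_entry 1 b i)"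
    by (rule arg_cong[where f = f]) (auto simp: pair2_def single_entry_def)
  also have "\<dots> = pair_norm (f (pair2 a 0)) (cmod b)"
    by (rule f_add_single_entry[OF pair2_in_cvec]) (use three_le in \<open>simp_all add: pair2_def\<close>)
  also have "f (pair2 a 0) = cmod a"
    using f_single_entry[of 0 a] three_le by (simp add: pair2_zero_right)
  finally show ?thesis .
qed

lemma pair_norm_nonneg: "0 \<le> pair_norm x y"
  using f_nonneg[OF pair2_in_cvec] by (simp add: pair_norm_def)

lemma pair_norm_commute: "pair_norm x y = pair_norm y x"
proof -
  have "pair2 (complex_of_real y) (complex_of_real x)
        = pair2 (complex_of_real x) (complex_of_real y) \<circ> Transposition.transpose 0 1"
    by (auto simp: pair2_def Transposition.transpose_def)
  then show ?thesis
    using f_transpose[OF _ _ pair2_in_cvec] three_le by (simp add: pair_norm_def)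
qed

lemma pair_norm_zero_right: "0 \<le> x \<Longrightarrow> pair_norm x 0 = x"
  using f_single_entry[of 0 "complex_of_real x"] three_le by (simp add: pair_norm_def pair2_zero_right)

lemma pair_norm_homogeneous:
  assumes "0 \<le> t"
  shows "pair_norm (t * x) (t * y) = t * pair_norm x y"
proof -
  have "pair2 (complex_of_real (t * x)) (complex_of_real (t * y))
        = (\<lambda>i. complex_of_real t * pair2 (complex_of_real x) (complex_of_real y) i)"
    by (auto simp: pair2_def)
  then show ?thesis
    using f_scale[OF pair2_in_cvec] assms by (simp add: pair_norm_def)
qed

lemma pair_norm_mono_left:
  assumes "0 \<le> x" "x \<le> x'" "0 \<le> y"
  shows "pair_norm x y \<le> pair_norm x' y"
proof (cases "x' = 0")
  case False
  then have "0 < x'" using assms by simp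
  \<comment> \<open>(x, y) is a convex combination of (x', y) and (-x', y), which both have norm pair_norm x' y\<close>
  define l where "l = (x' + x) / (2 * x')"
  define m where "m = (x' - x) / (2 * x')"
  have "0 \<le> l" "0 \<le> m" "l + m = 1" "x = l * x' + m * (- x')"
    using assms \<open>0 < x'\<close> by (auto simp: l_def m_def field_simps)
  have y_split: "y = l * y + m * y" using \<open>l + m = 1\<close> by (metis distrib_right mult_1)
  let ?P = "pair2 (complex_of_real x') (complex_of_real y)"
  let ?Q = "pair2 (complex_of_real (- x')) (complex_of_real y)"
  have "pair2 (complex_of_real x) (complex_of_real y)
        = (\<lambda>i. complex_of_real l * ?P i + complex_of_real m * ?Q i)"
    using arg_cong[OF \<open>x = l * x' + m * (- x')\<close>, of complex_of_real]
      arg_cong[OF y_split, of complex_of_real]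
    by (auto simp: pair2_def)
  then have "pair_norm x y \<le> f (\<lambda>i. complex_of_real l * ?P i) + f (\<lambda>i. complex_of_real m * ?Q i)"
    unfolding pair_norm_def by (simp add: f_triangle cvec_scale pair2_in_cvec)
  also have "\<dots> = l * pair_norm x' y + m * pair_norm x' y"
    using f_scale[OF pair2_in_cvec] f_pair2[of "complex_of_real (- x')"] \<open>0 \<le> l\<close> \<open>0 \<le> m\<close>
      \<open>0 < x'\<close> \<open>0 \<le> y\<close> by (simp add: pair_norm_def)
  also have "\<dots> = pair_norm x' y"
    using \<open>l + m = 1\<close> by (metis distrib_right mult_1)
  finally show ?thesis .
qed (use assms in simp)

lemma pair_norm_assoc_swap:
  assumes "0 \<le> a" "0 \<le> b" "0 \<le> c"
  shows "pair_norm (pair_norm a b) c = pair_norm (pair_norm a c) b"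
proof -
  \<comment> \<open>split (a, b, c) once as (a, b) + c and once as (a, 0, c) + b\<close>
  let ?r = complex_of_real
  let ?u = "\<lambda>i. if i = 0 then ?r a else if i = 1 then ?r b else if i = 2 then ?r c else 0"
  have "?u = (\<lambda>i. pair2 (?r a) (?r b) i + single_entry 2 (?r c) i)"
    by (auto simp: pair2_def single_entry_def)
  then have "f ?u = pair_norm (f (pair2 (?r a) (?r b))) c"
    using f_add_single_entry[OF pair2_in_cvec, of 2] three_le \<open>0 \<le> c\<close> by (simp add: pair2_def)
  also have "f (pair2 (?r a) (?r b)) = pair_norm a b" by (simp add: pair_norm_def)
  finally have ab_c: "f ?u = pair_norm (pair_norm a b) c" .
  define v where "v = pair2 (?r a) (?r c) \<circ> Transposition.transpose 1 2"
  have "v \<in> cvec N" "v 1 = 0"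
    using three_le by (auto simp: v_def cvec_def pair2_def Transposition.transpose_def)
  have "?u = (\<lambda>i. v i + single_entry 1 (?r b) i)"
    by (auto simp: v_def pair2_def single_entry_def Transposition.transpose_def)
  then have "f ?u = pair_norm (f v) b"
    using f_add_single_entry[OF \<open>v \<in> cvec N\<close> _ \<open>v 1 = 0\<close>] three_le \<open>0 \<le> b\<close> by simp
  also have "f v = pair_norm a c"
    using f_transpose[OF _ _ pair2_in_cvec] three_le by (simp add: v_def pair_norm_def)
  finally show ?thesis using ab_c by simp
qed

lemma pair_norm_assoc:
  assumes "0 \<le> x" "0 \<le> y" "0 \<le> z"
  shows "pair_norm (pair_norm x y) z = pair_norm x (pair_norm y z)"
  using pair_norm_assoc_swap[of y z x] pair_norm_commute assms by metis

sublocale homogeneous_monoid_op pair_norm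
  by unfold_locales
    (metis pair_norm_nonneg pair_norm_commute pair_norm_assoc pair_norm_zero_right
      pair_norm_homogeneous pair_norm_mono_left)+

lemma pair_norm_one_one_le: "pair_norm 1 1 \<le> 2"
proof -
  have "pair2 1 1 = (\<lambda>i. pair2 1 0 i + pair2 0 1 i)" by (auto simp: pair2_def)
  then have "f (pair2 1 1) \<le> f (pair2 1 0) + f (pair2 0 1)"
    by (simp add: f_triangle pair2_in_cvec)
  moreover have "f (pair2 0 1) = 1"
    using f_pair2[of 0 1] f_pair2[of 1 0] f_pair2_1_0 pair_norm_commute by simp
  ultimately show ?thesis using f_pair2_1_0 by (simp add: pair_norm_def)
qed

lemma f_eq_sum_powr:
  assumes "0 < p" and pnorm: "\<And>x y. 0 \<le> x \<Longrightarrow> 0 \<le> y \<Longrightarrow> pair_norm x y = (x powr p + y powr p) powr (1 / p)"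
    and "c \<in> cvec N"
  shows "f c = (\<Sum>i<N. cmod (c i) powr p) powr (1 / p)"
proof -
  define prefix where "prefix k i = (if i < k then c i else 0)" for k i
  have prefix_in_cvec: "prefix k \<in> cvec N" if "k \<le> N" for k
    using that by (simp add: prefix_def cvec_def)
  have "f (prefix k) = (\<Sum>i<k. cmod (c i) powr p) powr (1 / p)" if "k \<le> N" for k
    using that
  proof (induction k)
    case 0
    have "prefix 0 = (\<lambda>_. 0)" by (simp add: prefix_def fun_eq_iff)
    then show ?case using f_eq_0_iff[OF prefix_in_cvec[of 0]] by simp
  next
    case (Suc k)
    have "prefix (Suc k) = (\<lambda>i. prefix k i + single_entry k (c k) i)"
      by (auto simp: prefix_def single_entry_def)
    then have "f (prefix (Suc k)) = pair_norm (f (prefix k)) (cmod (c k))"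
      using f_add_single_entry[OF prefix_in_cvec] Suc.prems by (simp add: prefix_def)
    also have "\<dots> = (f (prefix k) powr p + cmod (c k) powr p) powr (1 / p)"
      using pnorm f_nonneg prefix_in_cvec Suc.prems by simp
    also have "f (prefix k) powr p = (\<Sum>i<k. cmod (c i) powr p)"
      using Suc \<open>0 < p\<close> by (simp add: powr_powr sum_nonneg)
    finally show ?case by simp
  qed
  moreover have "prefix N = c" using \<open>c \<in> cvec N\<close> by (auto simp: prefix_def cvec_def)
  ultimately show ?thesis by auto
qed

end

theorem theorem6:
  fixes N :: nat and f :: "(nat \<Rightarrow> complex) \<Rightarrow> real"
  assumes "N \<ge> 3"
    and "is_norm_on N f"
    and "perm_invariant N f"
    and "f (pair2 1 1) \<noteq> 1"
    and "\<forall>v\<in>cvec N. \<forall>w\<in>cvec N. vsupp v \<inter> vsupp w = {} \<longrightarrow>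
           f (\<lambda>i. v i + w i) = f (pair2 (complex_of_real (f v)) (complex_of_real (f w)))"
  shows "\<exists>p::real. p \<ge> 1 \<and>
           (\<forall>c\<in>cvec N. (\<forall>i<N. cmod (c i) \<in> \<rat>) \<longrightarrow>
              f c = (\<Sum>i<N. cmod (c i) powr p) powr (1 / p))"
proof -
  \<comment> \<open>the identity holds for every vector\<close>
  interpret composable_symmetric_norm N f
    using assms by unfold_locales
  have "pair_norm 1 1 \<noteq> 1"
    using assms(4) by (simp add: pair_norm_def)
  show ?thesis
  proof (intro exI conjI ballI impI)
    show "1 \<le> pnorm_exponent"
      using pnorm_exponent_ge_1[OF \<open>pair_norm 1 1 \<noteq> 1\<close> pair_norm_one_one_le] .
    show "f c = (\<Sum>i<N. cmod (c i) powr pnorm_exponent) powr (1 / pnorm_exponent)" if "c \<in> cvec N" for c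
      using f_eq_sum_powr[OF pnorm_exponent_pos eq_pnorm that] \<open>pair_norm 1 1 \<noteq> 1\<close> by blast
  qed
qed

end
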